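(* Let $f=a_nX^n+\dots+a_0\in K[X]$, $a_n\neq 0$, be a regular polynomial. Then the number of roots of $f$ in $K^\ast=K\setminus\{0\}$ equals the sum, over all lower edges $S$ of the Newton polygon of $f$, of the number of roots in $K^\ast$ of the lower binomial of $f$ corresponding to $S$.
   Context: $K$ is a field complete with respect to a non-archimedean discrete valuation $v$, normalized by $v(\pi)=1$ for a uniformizer $\pi$ of the valuation ring $A=\{x\in K: v(x)\geq 0\}$; the residue field $\kappa=A/\pi A$ is finite with $q$ elements and characteristic $p$. For $h=\sum_{i=0}^d c_iX^i\in K[X]$, the Newton polygon of $h$ is the convex hull of the points $(i,v(c_i))$ with $c_i\neq 0$. An edge of a polygon in $\mathbb{R}^2$ is a lower edge if it has an inner normal vector with positive second coordinate. $h$ is regular if for every lower edge $S$ of its Newton polygon, with vertices $(s,v(c_s))$ and $(s',v(c_{s'}))$, $s>s'$: (1) $S$ contains exactly two points of the set $\{(i,v(c_i)) : 0\leq i\leq d,\ c_i\neq 0\}$; (2) $p\nmid (s-s')$. In that case the polynomial $c_{s'}X^{s'}+c_sX^s$ is called the lower binomial of $h$ corresponding to $S$. *)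

theory Defs
  imports "HOL-Computational_Algebra.Polynomial" "HOL-Computational_Algebra.Primes"
begin

text \<open>A normalized discrete valuation v on the field 'k: the value v x is only
  meaningful for x \<noteq> 0 (v 0 plays the role of +infinity and is never used).\<close>
definition discrete_valuation :: "('k::field \<Rightarrow> int) \<Rightarrow> bool" where
  "discrete_valuation v \<longleftrightarrow>
     (\<forall>x y. x \<noteq> 0 \<longrightarrow> y \<noteq> 0 \<longrightarrow> v (x * y) = v x + v y) \<and>
     (\<forall>x y. x \<noteq> 0 \<longrightarrow> y \<noteq> 0 \<longrightarrow> x + y \<noteq> 0 \<longrightarrow> v (x + y) \<ge> min (v x) (v y)) \<and>
     (\<exists>\<pi>. \<pi> \<noteq> 0 \<and> v \<pi> = 1)"

text \<open>Completeness w.r.t. the valuation topology (x close to y iff x = y or v(x-y) large).\<close>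
definition valuation_complete :: "('k::field \<Rightarrow> int) \<Rightarrow> bool" where
  "valuation_complete v \<longleftrightarrow>
     (\<forall>X :: nat \<Rightarrow> 'k.
        (\<forall>N::int. \<exists>M. \<forall>m\<ge>M. \<forall>n\<ge>M. X m = X n \<or> v (X m - X n) \<ge> N) \<longrightarrow>
        (\<exists>L. \<forall>N::int. \<exists>M. \<forall>n\<ge>M. X n = L \<or> v (X n - L) \<ge> N))"

definition val_ring :: "('k::field \<Rightarrow> int) \<Rightarrow> 'k set" where
  "val_ring v = {x. x = 0 \<or> 0 \<le> v x}"

definition max_ideal :: "('k::field \<Rightarrow> int) \<Rightarrow> 'k set" where
  "max_ideal v = {x. x = 0 \<or> 1 \<le> v x}"

definition residue_rel :: "('k::field \<Rightarrow> int) \<Rightarrow> ('k \<times> 'k) set" where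
  "residue_rel v = {(x, y). x \<in> val_ring v \<and> y \<in> val_ring v \<and> x - y \<in> max_ideal v}"

definition residue_field :: "('k::field \<Rightarrow> int) \<Rightarrow> 'k set set" where
  "residue_field v = val_ring v // residue_rel v"

text \<open>Lower edge of the Newton polygon with vertices (s', v c_s') and (s, v c_s), s' < s:
  all points (i, v c_i), c_i \<noteq> 0, lie on or above the line through the two vertices,
  and the points on that line have abscissa in [s', s].\<close>
definition lower_edge :: "('k::field \<Rightarrow> int) \<Rightarrow> 'k poly \<Rightarrow> nat \<Rightarrow> nat \<Rightarrow> bool" where
  "lower_edge v f s' s \<longleftrightarrow> s' < s \<and> coeff f s' \<noteq> 0 \<and> coeff f s \<noteq> 0 \<and>
     (\<forall>i. coeff f i \<noteq> 0 \<longrightarrow>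
        (v (coeff f i) - v (coeff f s')) * (int s - int s')
          \<ge> (v (coeff f s) - v (coeff f s')) * (int i - int s')) \<and>
     (\<forall>i. coeff f i \<noteq> 0 \<longrightarrow>
        (v (coeff f i) - v (coeff f s')) * (int s - int s')
          = (v (coeff f s) - v (coeff f s')) * (int i - int s') \<longrightarrow> s' \<le> i \<and> i \<le> s)"

definition regular :: "('k::field \<Rightarrow> int) \<Rightarrow> nat \<Rightarrow> 'k poly \<Rightarrow> bool" where
  "regular v p f \<longleftrightarrow> (\<forall>s' s. lower_edge v f s' s \<longrightarrow>
     (\<forall>i. s' < i \<and> i < s \<and> coeff f i \<noteq> 0 \<longrightarrow>
        (v (coeff f i) - v (coeff f s')) * (int s - int s')
          \<noteq> (v (coeff f s) - v (coeff f s')) * (int i - int s')) \<and>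
     \<not> p dvd (s - s'))"

definition lower_binomial :: "'k::field poly \<Rightarrow> nat \<Rightarrow> nat \<Rightarrow> 'k poly" where
  "lower_binomial f s' s = monom (coeff f s') s' + monom (coeff f s) s"

end

theory Submission
  imports Defs
begin

text \<open>For a root \<open>x \<noteq> 0\<close> of \<open>f\<close> the terms \<open>c\<^sub>i x\<^sup>i\<close> have valuations \<open>v(c\<^sub>i) + i v(x)\<close>.
  By the ultrametric inequality the minimum is attained at least twice, and the indices attaining
  it span a lower edge of the Newton polygon of slope \<open>-v(x)\<close>; so the lower edges partition the
  nonzero roots. For the edge from \<open>s'\<close> to \<open>s\<close>, the substitution \<open>X \<mapsto> zX\<close> with \<open>v(z) = -slope\<close>
  followed by normalisation turns its roots into the unit roots of a polynomial with integral
  coefficients that is congruent modulo \<open>\<pi>\<close> to \<open>X\<^sup>s\<^sup>' + \<alpha>X\<^sup>s\<close>, \<open>\<alpha>\<close> a unit, and the same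
  substitution turns the roots of the lower binomial into the unit roots of that binomial itself.
  As \<open>p \<nmid> s - s'\<close>, every unit root of the binomial modulo \<open>\<pi>\<close> is simple, so Hensel's lemma
  matches the unit roots of the two polynomials bijectively.\<close>

text \<open>\<open>val_ideal v N\<close> is \<open>\<pi>\<^sup>N A\<close>; the disjunct \<open>x = 0\<close> stands for \<open>v 0 = \<infinity>\<close>.\<close>
definition val_ideal :: "('k::field \<Rightarrow> int) \<Rightarrow> int \<Rightarrow> 'k set" where
  "val_ideal v N = {x. x = 0 \<or> N \<le> v x}"

lemma max_ideal_eq_val_ideal: "max_ideal v = val_ideal v 1"
  by (simp add: max_ideal_def val_ideal_def)

locale valued_field =
  fixes v :: "'k::field \<Rightarrow> int"
  assumes valuation: "discrete_valuation v"
begin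

lemma v_mult: "x \<noteq> 0 \<Longrightarrow> y \<noteq> 0 \<Longrightarrow> v (x * y) = v x + v y"
  using valuation unfolding discrete_valuation_def by blast

lemma v_add: "x \<noteq> 0 \<Longrightarrow> y \<noteq> 0 \<Longrightarrow> x + y \<noteq> 0 \<Longrightarrow> min (v x) (v y) \<le> v (x + y)"
  using valuation unfolding discrete_valuation_def by blast

lemma v_one [simp]: "v 1 = 0"
  using v_mult[of 1 1] by simp

lemma v_minus [simp]: "v (- x) = v x"
proof (cases "x = 0")
  case False
  have "v (-1) = 0"
    using v_mult[of "-1" "-1"] by simp
  then show ?thesis
    using v_mult[of "-1" x] False by simp
qed simp

lemma v_inverse: "x \<noteq> 0 \<Longrightarrow> v (inverse x) = - v x"
  using v_mult[of x "inverse x"] by simp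

lemma v_divide: "x \<noteq> 0 \<Longrightarrow> y \<noteq> 0 \<Longrightarrow> v (x / y) = v x - v y"
  using v_mult[of x "inverse y"] v_inverse[of y] by (simp add: divide_inverse)

lemma v_power: "x \<noteq> 0 \<Longrightarrow> v (x ^ n) = int n * v x"
  by (induction n) (auto simp: v_mult algebra_simps)

lemma val_ideal_zero [simp]: "0 \<in> val_ideal v N"
  by (simp add: val_ideal_def)

lemma val_ideal_one: "1 \<in> val_ideal v 0"
  by (simp add: val_ideal_def)

lemma val_ideal_mono: "x \<in> val_ideal v N \<Longrightarrow> M \<le> N \<Longrightarrow> x \<in> val_ideal v M"
  unfolding val_ideal_def by auto

lemma val_ideal_add: "x + y \<in> val_ideal v N" if "x \<in> val_ideal v N" "y \<in> val_ideal v N"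
proof (cases "x = 0 \<or> y = 0 \<or> x + y = 0")
  case False
  then show ?thesis
    using v_add[of x y] that unfolding val_ideal_def by auto
qed (use that in auto)

lemma val_ideal_minus: "x \<in> val_ideal v N \<Longrightarrow> - x \<in> val_ideal v N"
  by (simp add: val_ideal_def)

lemma val_ideal_diff: "x \<in> val_ideal v N \<Longrightarrow> y \<in> val_ideal v N \<Longrightarrow> x - y \<in> val_ideal v N"
  unfolding diff_conv_add_uminus by (intro val_ideal_add val_ideal_minus)

lemma val_ideal_diff_commute: "x - y \<in> val_ideal v N \<longleftrightarrow> y - x \<in> val_ideal v N"
  using val_ideal_minus[of "x - y" N] val_ideal_minus[of "y - x" N] by auto

lemma val_ideal_mult: "x \<in> val_ideal v M \<Longrightarrow> y \<in> val_ideal v N \<Longrightarrow> x * y \<in> val_ideal v (M + N)"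
  unfolding val_ideal_def by (cases "x = 0"; cases "y = 0") (auto simp: v_mult)

lemma val_ideal_mult_left: "x \<in> val_ideal v 0 \<Longrightarrow> y \<in> val_ideal v N \<Longrightarrow> x * y \<in> val_ideal v N"
  using val_ideal_mult[of x 0 y N] by simp

lemma val_ideal_mult_right: "x \<in> val_ideal v N \<Longrightarrow> y \<in> val_ideal v 0 \<Longrightarrow> x * y \<in> val_ideal v N"
  using val_ideal_mult[of x N y 0] by simp

lemma val_ideal_power: "x \<in> val_ideal v 0 \<Longrightarrow> x ^ n \<in> val_ideal v 0"
  by (induction n) (auto simp: val_ideal_one val_ideal_mult_left)

lemma val_ideal_of_nat: "of_nat n \<in> val_ideal v 0"
  by (induction n) (auto simp: val_ideal_one val_ideal_add)

lemma val_ideal_of_int: "of_int n \<in> val_ideal v 0"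
proof (cases "n \<ge> 0")
  case True
  then show ?thesis
    using val_ideal_of_nat[of "nat n"] by simp
next
  case False
  then show ?thesis
    using val_ideal_minus[OF val_ideal_of_nat[of "nat (- n)"]] by simp
qed

lemma val_ideal_sum: "(\<And>i. i \<in> S \<Longrightarrow> f i \<in> val_ideal v N) \<Longrightarrow> sum f S \<in> val_ideal v N"
  by (induction S rule: infinite_finite_induct) (auto intro: val_ideal_add)

lemma val_ideal_Inter: "x = 0" if "\<And>N. x \<in> val_ideal v N"
proof (rule ccontr)
  assume "x \<noteq> 0"
  with that[of "v x + 1"] show False
    by (simp add: val_ideal_def)
qed

lemma v_add_small:
  assumes "x \<noteq> 0" "v x < N" "e \<in> val_ideal v N"
  shows "x + e \<noteq> 0 \<and> v (x + e) = v x"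
proof (cases "e = 0")
  case False
  then have ve: "N \<le> v e"
    using assms(3) by (simp add: val_ideal_def)
  have ne: "x + e \<noteq> 0"
  proof
    assume "x + e = 0"
    then have "v x = v e"
      by (simp add: add_eq_0_iff)
    then show False
      using ve assms(2) by simp
  qed
  have "v x \<le> v (x + e)"
    using v_add[OF assms(1) False ne] ve assms(2) by simp
  moreover have "min (v (x + e)) (v e) \<le> v x"
    using v_add[OF ne, of "- e"] False assms(1) by simp
  ultimately show ?thesis
    using ne ve assms(2) by auto
qed (use assms in simp)

definition val_unit :: "'k \<Rightarrow> bool" where
  "val_unit x \<longleftrightarrow> x \<noteq> 0 \<and> v x = 0"

lemma val_unit_in_val_ring: "val_unit x \<Longrightarrow> x \<in> val_ideal v 0"
  by (simp add: val_unit_def val_ideal_def)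

lemma val_unit_mult: "val_unit x \<Longrightarrow> val_unit y \<Longrightarrow> val_unit (x * y)"
  by (simp add: val_unit_def v_mult)

lemma val_unit_power: "val_unit x \<Longrightarrow> val_unit (x ^ n)"
  by (simp add: val_unit_def v_power)

lemma val_unit_inverse: "val_unit x \<Longrightarrow> val_unit (inverse x)"
  by (simp add: val_unit_def v_inverse)

lemma val_unit_add_small: "val_unit x \<Longrightarrow> e \<in> val_ideal v 1 \<Longrightarrow> val_unit (x + e)"
  using v_add_small[of x 1 e] by (simp add: val_unit_def)

lemma val_unit_congruent: "val_unit x \<Longrightarrow> y - x \<in> val_ideal v 1 \<Longrightarrow> val_unit y"
  using val_unit_add_small[of x "y - x"] by simp

lemma val_ideal_divide_unit: "x \<in> val_ideal v N \<Longrightarrow> val_unit c \<Longrightarrow> x / c \<in> val_ideal v N"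
  unfolding divide_inverse
  using val_ideal_mult_right val_unit_in_val_ring val_unit_inverse by blast

section \<open>Hensel's lemma\<close>

definition integral_poly :: "'k poly \<Rightarrow> bool" where
  "integral_poly h \<longleftrightarrow> (\<forall>i. coeff h i \<in> val_ideal v 0)"

lemma poly_in_val_ideal:
  assumes "\<And>i. coeff h i \<in> val_ideal v N" "x \<in> val_ideal v 0"
  shows "poly h x \<in> val_ideal v N"
  unfolding poly_altdef
  by (intro val_ideal_sum val_ideal_mult_right val_ideal_power assms)

lemma coeff_pderiv_in_val_ideal:
  "(\<And>i. coeff h i \<in> val_ideal v N) \<Longrightarrow> coeff (pderiv h) i \<in> val_ideal v N"
  unfolding coeff_pderiv by (intro val_ideal_mult_left val_ideal_of_nat)

lemma integral_poly_pderiv: "integral_poly h \<Longrightarrow> integral_poly (pderiv h)"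
  unfolding integral_poly_def using coeff_pderiv_in_val_ideal by blast

lemma poly_diff_factor:
  assumes "integral_poly h" "x \<in> val_ideal v 0" "y \<in> val_ideal v 0"
  shows "\<exists>q \<in> val_ideal v 0. poly h x - poly h y = (x - y) * q"
  using assms(1)
proof (induction h)
  case (pCons a h)
  then have "integral_poly h"
    unfolding integral_poly_def by (metis coeff_pCons_Suc)
  then obtain q where q: "q \<in> val_ideal v 0" "poly h x = poly h y + (x - y) * q"
    using pCons.IH by (metis add.commute diff_add_cancel)
  have "poly (pCons a h) x - poly (pCons a h) y = (x - y) * (poly h x + y * q)"
    unfolding poly_pCons q(2) by algebra
  moreover have "poly h x + y * q \<in> val_ideal v 0"
    using \<open>integral_poly h\<close> assms(2,3) q(1) unfolding integral_poly_def
    by (intro val_ideal_add poly_in_val_ideal val_ideal_mult_left) auto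
  ultimately show ?case
    by blast
qed (use val_ideal_zero in auto)

lemma poly_diff_in_val_ideal:
  assumes "integral_poly h" "x \<in> val_ideal v 0" "y \<in> val_ideal v 0" "x - y \<in> val_ideal v N"
  shows "poly h x - poly h y \<in> val_ideal v N"
  using poly_diff_factor[OF assms(1-3)] val_ideal_mult_right[OF assms(4)] by auto

lemma poly_taylor_val:
  assumes "integral_poly h" "x \<in> val_ideal v 0" "t \<in> val_ideal v 0"
  shows "\<exists>Q \<in> val_ideal v 0. poly h (x + t) = poly h x + t * poly (pderiv h) x + t\<^sup>2 * Q"
  using assms(1)
proof (induction h)
  case (pCons a h)
  then have h: "integral_poly h"
    unfolding integral_poly_def by (metis coeff_pCons_Suc)
  obtain Q where Q: "Q \<in> val_ideal v 0"
    "poly h (x + t) = poly h x + t * poly (pderiv h) x + t\<^sup>2 * Q"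
    using pCons.IH[OF h] by blast
  obtain q where q: "q \<in> val_ideal v 0" "poly h (x + t) - poly h x = (x + t - x) * q"
    using poly_diff_factor[OF h val_ideal_add[OF assms(2,3)] assms(2)] by blast
  have "poly (pCons a h) (x + t) = a + x * poly h (x + t) + t * poly h (x + t)"
    by (simp add: algebra_simps)
  also have "\<dots> = a + x * (poly h x + t * poly (pderiv h) x + t\<^sup>2 * Q) + t * (poly h x + t * q)"
    using Q(2) q(2) by (simp add: algebra_simps)
  also have "\<dots> = poly (pCons a h) x + t * poly (pderiv (pCons a h)) x + t\<^sup>2 * (x * Q + q)"
    by (simp add: pderiv_pCons algebra_simps power2_eq_square)
  finally show ?case
    using val_ideal_add[OF val_ideal_mult_left[OF assms(2) Q(1)] q(1)] by blast
qed (use val_ideal_zero in auto)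

lemma hensel_unique:
  assumes h: "integral_poly h" and u: "u1 \<in> val_ideal v 0" "u2 \<in> val_ideal v 0"
    and roots: "poly h u1 = 0" "poly h u2 = 0" and close: "u2 - u1 \<in> val_ideal v 1"
    and simple: "val_unit (poly (pderiv h) u1)"
  shows "u1 = u2"
proof -
  define t where "t = u2 - u1"
  have t: "t \<in> val_ideal v 0"
    using val_ideal_mono[OF close] by (simp add: t_def)
  obtain Q where Q: "Q \<in> val_ideal v 0"
    "poly h (u1 + t) = poly h u1 + t * poly (pderiv h) u1 + t\<^sup>2 * Q"
    using poly_taylor_val[OF h u(1) t] by blast
  then have "t * (poly (pderiv h) u1 + t * Q) = 0"
    using roots by (simp add: t_def algebra_simps power2_eq_square)
  moreover have "val_unit (poly (pderiv h) u1 + t * Q)"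
    using val_unit_add_small[OF simple val_ideal_mult_right[OF _ Q(1)]] close
    by (simp add: t_def)
  ultimately show ?thesis
    by (simp add: t_def val_unit_def)
qed

lemma newton_step:
  assumes h: "integral_poly h" and x: "x \<in> val_ideal v 0" and N: "1 \<le> N"
    and hx: "poly h x \<in> val_ideal v N"
    and c: "val_unit c" "c - poly (pderiv h) x \<in> val_ideal v 1"
  shows "poly h (x - poly h x / c) \<in> val_ideal v (N + 1)"
proof -
  define t where "t = - poly h x / c"
  have t: "t \<in> val_ideal v N"
    unfolding t_def using val_ideal_divide_unit[OF val_ideal_minus[OF hx] c(1)] by simp
  obtain Q where Q: "Q \<in> val_ideal v 0"
    "poly h (x + t) = poly h x + t * poly (pderiv h) x + t\<^sup>2 * Q"
    using poly_taylor_val[OF h x val_ideal_mono[OF t]] N by auto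
  have "poly h x + t * poly (pderiv h) x = poly h x * ((c - poly (pderiv h) x) / c)"
    using c(1) by (simp add: t_def val_unit_def field_simps)
  also have "\<dots> \<in> val_ideal v (N + 1)"
    using val_ideal_mult[OF hx val_ideal_divide_unit[OF c(2,1)]] .
  finally have "poly h x + t * poly (pderiv h) x \<in> val_ideal v (N + 1)" .
  moreover have "t\<^sup>2 * Q \<in> val_ideal v (N + 1)"
    using val_ideal_mult[OF t t] N unfolding power2_eq_square
    by (intro val_ideal_mult_right[OF _ Q(1)]) (auto elim: val_ideal_mono)
  ultimately show ?thesis
    using Q(2) val_ideal_add by (simp add: t_def)
qed

lemma val_ideal_telescope:
  assumes "\<And>n. X (Suc n) - X n \<in> val_ideal v (int n)" "n \<le> m"
  shows "X m - X n \<in> val_ideal v (int n)"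
  using assms(2)
proof (induction m rule: dec_induct)
  case (step k)
  have "X (Suc k) - X n = (X (Suc k) - X k) + (X k - X n)"
    by simp
  then show ?case
    using val_ideal_add[OF val_ideal_mono[OF assms(1)[of k]] step.IH] step.hyps by simp
qed simp

lemma valuation_complete_limit:
  assumes "valuation_complete v" "\<And>n. X (Suc n) - X n \<in> val_ideal v (int n)"
  obtains L where "\<And>N. \<exists>M. \<forall>n\<ge>M. X n - L \<in> val_ideal v N"
proof -
  have "X m - X n \<in> val_ideal v N" if "nat N \<le> m" "nat N \<le> n" for m n N
    using val_ideal_telescope[OF assms(2), of n m] val_ideal_telescope[OF assms(2), of m n] that
      val_ideal_diff_commute
    by (cases "n \<le> m") (auto elim!: val_ideal_mono)
  then have "\<forall>N::int. \<exists>M. \<forall>m\<ge>M. \<forall>n\<ge>M. X m = X n \<or> v (X m - X n) \<ge> N"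
    unfolding val_ideal_def by fastforce
  then obtain L where "\<forall>N::int. \<exists>M. \<forall>n\<ge>M. X n = L \<or> v (X n - L) \<ge> N"
    using assms(1) unfolding valuation_complete_def by blast
  then show ?thesis
    using that unfolding val_ideal_def by auto
qed

lemma newton_iterates:
  assumes h: "integral_poly h" and r: "r \<in> val_ideal v 0" "poly h r \<in> val_ideal v 1"
    and simple: "val_unit (poly (pderiv h) r)"
  defines "X \<equiv> rec_nat r (\<lambda>_ x. x - poly h x / poly (pderiv h) r)"
  shows "X n \<in> val_ideal v 0 \<and> X n - r \<in> val_ideal v 1 \<and> poly h (X n) \<in> val_ideal v (int n + 1)"
proof (induction n)
  case (Suc n)
  let ?c = "poly (pderiv h) r"
  have X_Suc: "X (Suc n) = X n - poly h (X n) / ?c"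
    by (simp add: X_def)
  have Xn: "X n \<in> val_ideal v 0" "X n - r \<in> val_ideal v 1" "poly h (X n) \<in> val_ideal v (int n + 1)"
    using Suc by auto
  have "?c - poly (pderiv h) (X n) \<in> val_ideal v 1"
    using poly_diff_in_val_ideal[OF integral_poly_pderiv[OF h] r(1) Xn(1)] Xn(2)
    by (simp add: val_ideal_diff_commute)
  then have "poly h (X (Suc n)) \<in> val_ideal v (int (Suc n) + 1)"
    using newton_step[OF h Xn(1) _ Xn(3)] simple unfolding X_Suc by simp
  moreover have step: "poly h (X n) / ?c \<in> val_ideal v 1"
    using val_ideal_divide_unit[OF Xn(3) simple] by (auto elim: val_ideal_mono)
  ultimately show ?case
    using val_ideal_diff[OF Xn(2) step] val_ideal_diff[OF Xn(1) val_ideal_mono[OF step]]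
    unfolding X_Suc by (simp add: algebra_simps)
qed (use r in \<open>simp add: X_def\<close>)

lemma hensel_exists:
  assumes complete: "valuation_complete v" and h: "integral_poly h"
    and r: "r \<in> val_ideal v 0" "poly h r \<in> val_ideal v 1"
    and simple: "val_unit (poly (pderiv h) r)"
  obtains u where "poly h u = 0" "u - r \<in> val_ideal v 1"
proof -
  define X where "X = rec_nat r (\<lambda>_ x. x - poly h x / poly (pderiv h) r)"
  have X_ring: "X n \<in> val_ideal v 0" and X_r: "X n - r \<in> val_ideal v 1"
    and X_root: "poly h (X n) \<in> val_ideal v (int n + 1)" for n
    using newton_iterates[OF h r simple] unfolding X_def by blast+
  have "X (Suc n) - X n = - (poly h (X n) / poly (pderiv h) r)" for n
    by (simp add: X_def)
  then have "X (Suc n) - X n \<in> val_ideal v (int n)" for n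
    using val_ideal_mono[OF val_ideal_minus[OF val_ideal_divide_unit[OF X_root simple]]] by simp
  then obtain L where L: "\<And>N. \<exists>M. \<forall>n\<ge>M. X n - L \<in> val_ideal v N"
    using valuation_complete_limit[OF complete] by blast
  obtain M1 where M1: "X M1 - L \<in> val_ideal v 1"
    using L[of 1] by blast
  have L_r: "L - r \<in> val_ideal v 1"
    using val_ideal_diff[OF X_r[of M1] M1] by simp
  have L_ring: "L \<in> val_ideal v 0"
    using val_ideal_diff[OF X_ring[of M1] val_ideal_mono[OF M1]] by simp
  have "poly h L = 0"
  proof (rule val_ideal_Inter)
    fix N
    obtain M where M: "\<forall>n\<ge>M. X n - L \<in> val_ideal v N"
      using L by blast
    define n where "n = max M (nat N)"
    have "poly h (X n) - poly h L \<in> val_ideal v N"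
      using poly_diff_in_val_ideal[OF h X_ring L_ring] M by (simp add: n_def)
    moreover have "poly h (X n) \<in> val_ideal v N"
      using val_ideal_mono[OF X_root] by (simp add: n_def)
    ultimately show "poly h L \<in> val_ideal v N"
      using val_ideal_diff by fastforce
  qed
  with L_r that show ?thesis
    by blast
qed

section \<open>Unit roots of congruent polynomials\<close>

definition unit_roots :: "'k poly \<Rightarrow> 'k set" where
  "unit_roots h = {u. val_unit u \<and> poly h u = 0}"

definition residually_simple :: "'k poly \<Rightarrow> bool" where
  "residually_simple h \<longleftrightarrow>
     (\<forall>y. val_unit y \<longrightarrow> poly h y \<in> val_ideal v 1 \<longrightarrow> val_unit (poly (pderiv h) y))"

lemma congruent_poly_values:
  assumes "\<And>i. coeff (h1 - h2) i \<in> val_ideal v 1" "y \<in> val_ideal v 0"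
  shows "poly h1 y - poly h2 y \<in> val_ideal v 1"
    and "poly (pderiv h1) y - poly (pderiv h2) y \<in> val_ideal v 1"
  using poly_in_val_ideal[OF assms(1,2)] poly_in_val_ideal[OF coeff_pderiv_in_val_ideal[OF assms(1)] assms(2)]
  by (simp_all add: pderiv_diff)

lemma residually_simple_congruent:
  assumes "residually_simple h1" "\<And>i. coeff (h1 - h2) i \<in> val_ideal v 1"
  shows "residually_simple h2"
  unfolding residually_simple_def
proof (intro allI impI)
  fix y assume y: "val_unit y" "poly h2 y \<in> val_ideal v 1"
  note congruent = congruent_poly_values[OF assms(2) val_unit_in_val_ring[OF y(1)]]
  have "poly h1 y \<in> val_ideal v 1"
    using val_ideal_add[OF congruent(1) y(2)] by simp
  then have "val_unit (poly (pderiv h1) y)"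
    using assms(1) y(1) unfolding residually_simple_def by blast
  then show "val_unit (poly (pderiv h2) y)"
    using val_unit_congruent congruent(2) val_ideal_diff_commute by blast
qed

lemma unit_root_lift:
  assumes complete: "valuation_complete v" and h2: "integral_poly h2"
    and congruent: "\<And>i. coeff (h1 - h2) i \<in> val_ideal v 1"
    and simple: "residually_simple h1" and y: "y \<in> unit_roots h1"
  shows "\<exists>u. u \<in> unit_roots h2 \<and> u - y \<in> val_ideal v 1"
proof -
  have y1: "val_unit y" "poly h1 y = 0"
    using y by (auto simp: unit_roots_def)
  have "poly h2 y \<in> val_ideal v 1"
    using val_ideal_minus[OF congruent_poly_values(1)[OF congruent val_unit_in_val_ring[OF y1(1)]]] y1(2)
    by simp
  moreover have "val_unit (poly (pderiv h2) y)"
    using residually_simple_congruent[OF simple congruent] y1(1) \<open>poly h2 y \<in> val_ideal v 1\<close>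
    unfolding residually_simple_def by blast
  ultimately obtain u where u: "poly h2 u = 0" "u - y \<in> val_ideal v 1"
    using hensel_exists[OF complete h2 val_unit_in_val_ring[OF y1(1)]] by blast
  then have "u \<in> unit_roots h2"
    using val_unit_congruent[OF y1(1)] by (simp add: unit_roots_def)
  with u(2) show ?thesis
    by blast
qed

lemma card_unit_roots_le:
  assumes complete: "valuation_complete v"
    and h1: "integral_poly h1" and h2: "integral_poly h2" "h2 \<noteq> 0"
    and congruent: "\<And>i. coeff (h1 - h2) i \<in> val_ideal v 1"
    and simple: "residually_simple h1"
  shows "card (unit_roots h1) \<le> card (unit_roots h2)"
proof -
  note lift = unit_root_lift[OF complete h2(1) congruent simple]
  define lift_root where "lift_root y = (SOME u. u \<in> unit_roots h2 \<and> u - y \<in> val_ideal v 1)" for y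
  have lift_root: "lift_root y \<in> unit_roots h2" "lift_root y - y \<in> val_ideal v 1"
    if "y \<in> unit_roots h1" for y
    using someI_ex[OF lift[OF that]] unfolding lift_root_def by blast+
  have "inj_on lift_root (unit_roots h1)"
  proof (rule inj_onI)
    fix y1 y2 assume y: "y1 \<in> unit_roots h1" "y2 \<in> unit_roots h1" "lift_root y1 = lift_root y2"
    have "y2 - y1 \<in> val_ideal v 1"
      using val_ideal_diff[OF lift_root(2)[OF y(1)] lift_root(2)[OF y(2)]] y(3) by simp
    moreover have "val_unit (poly (pderiv h1) y1)"
      using simple y(1) unfolding residually_simple_def unit_roots_def by simp
    ultimately show "y1 = y2"
      using y(1,2) hensel_unique[OF h1] val_unit_in_val_ring by (simp add: unit_roots_def)
  qed
  moreover have "finite (unit_roots h2)"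
    using poly_roots_finite[OF h2(2)] by (rule rev_finite_subset) (auto simp: unit_roots_def)
  ultimately show ?thesis
    using lift_root(1) by (intro card_inj_on_le) auto
qed

lemma card_unit_roots_eq:
  assumes "valuation_complete v"
    and "integral_poly h1" "h1 \<noteq> 0" "integral_poly h2" "h2 \<noteq> 0"
    and congruent: "\<And>i. coeff (h1 - h2) i \<in> val_ideal v 1"
    and "residually_simple h2"
  shows "card (unit_roots h1) = card (unit_roots h2)"
proof -
  have "coeff (h2 - h1) i \<in> val_ideal v 1" for i
    using val_ideal_minus[OF congruent[of i]] by simp
  then show ?thesis
    using assms residually_simple_congruent
    by (intro antisym card_unit_roots_le) blast+
qed

lemma of_nat_val_unit:
  assumes "prime p" "of_nat p \<in> val_ideal v 1" "\<not> p dvd d"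
  shows "val_unit (of_nat d)"
proof -
  obtain a b where "a * int p + b * int d = 1"
    using bezout_int[of "int p" "int d"] prime_imp_coprime[OF assms(1,3)] by auto
  then have "of_int a * of_nat p + of_int b * of_nat d = (1 :: 'k)"
    by (metis of_int_1 of_int_add of_int_mult of_int_of_nat_eq)
  moreover have "(1 :: 'k) \<notin> val_ideal v 1"
    by (simp add: val_ideal_def)
  ultimately have "(of_nat d :: 'k) \<notin> val_ideal v 1"
    using assms(2) val_ideal_add val_ideal_mult_left val_ideal_of_int by metis
  then show ?thesis
    using val_ideal_of_nat[of d] unfolding val_ideal_def val_unit_def by auto
qed

text \<open>For a unit root \<open>y\<close> of \<open>X\<^sup>s\<^sup>' + \<alpha> X\<^sup>s\<close> modulo the maximal ideal,
  \<open>y h'(y) = (s - s') \<alpha> y\<^sup>s + s' h(y)\<close> is a unit plus a small term.\<close>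
lemma binomial_residually_simple:
  assumes "s' < s" "val_unit \<alpha>" "val_unit (of_nat (s - s'))"
  shows "residually_simple (monom 1 s' + monom \<alpha> s)"
  unfolding residually_simple_def
proof (intro allI impI)
  fix y assume y: "val_unit y" "poly (monom 1 s' + monom \<alpha> s) y \<in> val_ideal v 1"
  define P where "P = poly (pderiv (monom 1 s' + monom \<alpha> s)) y"
  have "y * P = of_nat (s - s') * \<alpha> * y ^ s + of_nat s' * poly (monom 1 s' + monom \<alpha> s) y"
  proof -
    have "y * P = of_nat s' * (y * y ^ (s' - 1)) + of_nat s * \<alpha> * (y * y ^ (s - 1))"
      by (simp add: P_def pderiv_add pderiv_monom poly_monom algebra_simps)
    also have "\<dots> = of_nat s' * y ^ s' + of_nat s * \<alpha> * y ^ s"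
      using assms(1) by (cases s; cases s') auto
    also have "\<dots> = of_nat (s - s') * \<alpha> * y ^ s + of_nat s' * (y ^ s' + \<alpha> * y ^ s)"
      using assms(1) by (simp add: of_nat_diff algebra_simps)
    finally show ?thesis
      by (simp add: poly_monom)
  qed
  moreover have "val_unit (of_nat (s - s') * \<alpha> * y ^ s)"
    using assms(2,3) y(1) by (intro val_unit_mult val_unit_power)
  ultimately have "val_unit (y * P)"
    using val_unit_add_small val_ideal_mult_left[OF val_ideal_of_nat y(2)] by metis
  then show "val_unit P"
    using y(1) v_mult[of y P] by (auto simp: val_unit_def)
qed

end

section \<open>Lower edges of the Newton polygon\<close>

definition newton_weight :: "('k::zero \<Rightarrow> int) \<Rightarrow> 'k poly \<Rightarrow> int \<Rightarrow> nat \<Rightarrow> int" where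
  "newton_weight v f e i = v (coeff f i) + int i * e"

definition newton_argmin :: "('k::zero \<Rightarrow> int) \<Rightarrow> 'k poly \<Rightarrow> int \<Rightarrow> nat set" where
  "newton_argmin v f e = {i. coeff f i \<noteq> 0 \<and>
     (\<forall>j. coeff f j \<noteq> 0 \<longrightarrow> newton_weight v f e i \<le> newton_weight v f e j)}"

lemma newton_weight_less_outside_argmin:
  assumes "j \<in> newton_argmin v f e" "i \<notin> newton_argmin v f e" "coeff f i \<noteq> 0"
  shows "newton_weight v f e j < newton_weight v f e i"
  using assms unfolding newton_argmin_def by force

lemma newton_weight_edge_eq_iff:
  assumes "s' < s" "newton_weight v f e0 s' = newton_weight v f e0 s"
  shows "newton_weight v f e s' = newton_weight v f e s \<longleftrightarrow> e = e0"
proof -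
  have "newton_weight v f e s' = newton_weight v f e s \<longleftrightarrow>
      (int s - int s') * e = (int s - int s') * e0"
    using assms(2) unfolding newton_weight_def by (auto simp: algebra_simps)
  then show ?thesis
    using assms(1) by simp
qed

lemma newton_line_eq:
  assumes "newton_weight v f e s' = newton_weight v f e s"
  shows "(v (coeff f i) - v (coeff f s')) * (int s - int s')
      - (v (coeff f s) - v (coeff f s')) * (int i - int s')
    = (int s - int s') * (newton_weight v f e i - newton_weight v f e s')"
  using assms unfolding newton_weight_def by algebra

lemma lower_edge_argmin:
  assumes edge: "lower_edge v f s' s" and W: "newton_weight v f e s' = newton_weight v f e s"
  shows "s' \<in> newton_argmin v f e" "s \<in> newton_argmin v f e" "newton_argmin v f e \<subseteq> {s'..s}"
proof -
  let ?W = "newton_weight v f e"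
  have s: "s' < s" "coeff f s' \<noteq> 0" "coeff f s \<noteq> 0"
    using edge by (auto simp: lower_edge_def)
  have min: "?W s' \<le> ?W i" if "coeff f i \<noteq> 0" for i
  proof -
    have "0 \<le> (int s - int s') * (?W i - ?W s')"
      using edge that newton_line_eq[OF W, of i] unfolding lower_edge_def by auto
    then show ?thesis
      using s(1) by (simp add: zero_le_mult_iff)
  qed
  then show "s' \<in> newton_argmin v f e" "s \<in> newton_argmin v f e"
    using s W by (auto simp: newton_argmin_def)
  show "newton_argmin v f e \<subseteq> {s'..s}"
  proof
    fix i assume "i \<in> newton_argmin v f e"
    then have "coeff f i \<noteq> 0" "?W i \<le> ?W s'"
      using s(2) unfolding newton_argmin_def by auto
    then have "coeff f i \<noteq> 0" "?W i = ?W s'"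
      using min[of i] by auto
    then show "i \<in> {s'..s}"
      using edge newton_line_eq[OF W, of i] unfolding lower_edge_def by auto
  qed
qed

lemma lower_edge_if_argmin:
  assumes s: "s' < s" and argmin: "s' \<in> newton_argmin v f e" "s \<in> newton_argmin v f e"
    "newton_argmin v f e \<subseteq> {s'..s}"
  shows "lower_edge v f s' s" "newton_weight v f e s' = newton_weight v f e s"
proof -
  let ?W = "newton_weight v f e"
  have coeffs: "coeff f s' \<noteq> 0" "coeff f s \<noteq> 0"
    and min: "\<And>i. coeff f i \<noteq> 0 \<Longrightarrow> ?W s' \<le> ?W i"
    using argmin by (auto simp: newton_argmin_def)
  show W: "?W s' = ?W s"
    using argmin coeffs by (auto simp: newton_argmin_def intro: antisym)
  show "lower_edge v f s' s"
    unfolding lower_edge_def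
  proof (intro conjI allI impI)
    fix i assume "coeff f i \<noteq> 0"
    then have "0 \<le> (int s - int s') * (?W i - ?W s')"
      using min s by simp
    then show "(v (coeff f s) - v (coeff f s')) * (int i - int s')
        \<le> (v (coeff f i) - v (coeff f s')) * (int s - int s')"
      using newton_line_eq[OF W, of i] by simp
  next
    fix i assume i: "coeff f i \<noteq> 0" and "(v (coeff f i) - v (coeff f s')) * (int s - int s')
        = (v (coeff f s) - v (coeff f s')) * (int i - int s')"
    then have "(int s - int s') * (?W i - ?W s') = 0"
      using newton_line_eq[OF W, of i] by simp
    then have "?W i = ?W s'"
      using s by simp
    then have "i \<in> newton_argmin v f e"
      using i min by (simp add: newton_argmin_def)
    then show "s' \<le> i" "i \<le> s"
      using argmin(3) by auto
  qed (use s coeffs in auto)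
qed

lemma regular_newton_argmin:
  assumes "regular v p f" "lower_edge v f s' s" "newton_weight v f e s' = newton_weight v f e s"
  shows "newton_argmin v f e = {s', s}"
proof -
  note argmin = lower_edge_argmin[OF assms(2,3)]
  have "i = s' \<or> i = s" if "i \<in> newton_argmin v f e" for i
  proof (rule ccontr)
    assume "\<not> (i = s' \<or> i = s)"
    then have "s' < i" "i < s" "coeff f i \<noteq> 0"
      using argmin(3) that by (auto simp: newton_argmin_def)
    moreover have "newton_weight v f e i = newton_weight v f e s'"
      using that argmin(1) by (force simp: newton_argmin_def)
    with newton_line_eq[OF assms(3), of i]
    have "(v (coeff f i) - v (coeff f s')) * (int s - int s')
        = (v (coeff f s) - v (coeff f s')) * (int i - int s')"
      by simp
    ultimately show False
      using assms(1,2) unfolding regular_def by blast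
  qed
  with argmin show ?thesis
    by blast
qed

lemma lower_edges_unique:
  assumes "lower_edge v f s1' s1" "newton_weight v f e s1' = newton_weight v f e s1"
    and "lower_edge v f s2' s2" "newton_weight v f e s2' = newton_weight v f e s2"
  shows "s1' = s2' \<and> s1 = s2"
proof -
  have "s1' \<le> s2'" "s2' \<le> s1'" "s1 \<le> s2" "s2 \<le> s1"
    using lower_edge_argmin[OF assms(1,2)] lower_edge_argmin[OF assms(3,4)] by auto
  then show ?thesis
    by simp
qed

section \<open>Roots attached to a lower edge\<close>

lemma lower_binomial_rescale:
  "lower_binomial (smult c (pcompose h [:0, z:])) s' s =
     smult c (pcompose (lower_binomial h s' s) [:0, z:])"
  by (simp add: lower_binomial_def poly_eq_iff coeff_pcompose_linear coeff_monom algebra_simps)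

context valued_field
begin

lemma v_coeff_monomial:
  "coeff f i \<noteq> 0 \<Longrightarrow> x \<noteq> 0 \<Longrightarrow> v (coeff f i * x ^ i) = newton_weight v f (v x) i"
  by (simp add: v_mult v_power newton_weight_def)

lemma sum_nonzero_if_unique_min:
  assumes "finite S" "j \<in> S" "t j \<noteq> 0" "\<And>i. i \<in> S \<Longrightarrow> i \<noteq> j \<Longrightarrow> t i \<in> val_ideal v (v (t j) + 1)"
  shows "sum t S \<noteq> 0"
proof -
  have "sum t (S - {j}) \<in> val_ideal v (v (t j) + 1)"
    using assms(4) by (intro val_ideal_sum) auto
  then show ?thesis
    using v_add_small[OF assms(3), of "v (t j) + 1"] sum.remove[OF assms(1,2), of t] by simp
qed

lemma root_newton_argmin_ne_singleton:
  assumes x: "x \<noteq> 0" "poly f x = 0" and j: "j \<in> newton_argmin v f (v x)"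
  shows "\<exists>i\<in>newton_argmin v f (v x). i \<noteq> j"
proof (rule ccontr)
  assume unique: "\<not> (\<exists>i\<in>newton_argmin v f (v x). i \<noteq> j)"
  have "(\<Sum>i\<le>degree f. coeff f i * x ^ i) \<noteq> 0"
  proof (rule sum_nonzero_if_unique_min)
    show "j \<in> {..degree f}" "coeff f j * x ^ j \<noteq> 0"
      using j x(1) by (auto simp: newton_argmin_def le_degree)
  next
    fix i assume "i \<noteq> j"
    show "coeff f i * x ^ i \<in> val_ideal v (v (coeff f j * x ^ j) + 1)"
    proof (cases "coeff f i = 0")
      case False
      then have "newton_weight v f (v x) j < newton_weight v f (v x) i"
        using newton_weight_less_outside_argmin[OF j] unique \<open>i \<noteq> j\<close> by blast
      then show ?thesis
        using False j x(1) by (simp add: val_ideal_def v_coeff_monomial newton_argmin_def)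
    qed simp
  qed simp
  then show False
    using x(2) by (simp add: poly_altdef)
qed

lemma root_lower_edge:
  assumes "f \<noteq> 0" "x \<noteq> 0" "poly f x = 0"
  obtains s' s where "lower_edge v f s' s" "newton_weight v f (v x) s' = newton_weight v f (v x) s"
proof -
  let ?W = "newton_weight v f (v x)"
  let ?M = "newton_argmin v f (v x)"
  define S where "S = {i. coeff f i \<noteq> 0}"
  have S: "finite S" "S \<noteq> {}"
    using assms(1) by (auto simp: S_def poly_eq_iff intro: finite_subset[of _ "{..degree f}"] le_degree)
  then have "arg_min_on ?W S \<in> ?M"
    using arg_min_if_finite[OF S, of ?W] by (auto simp: S_def newton_argmin_def not_less)
  moreover have M: "finite ?M"
    using S(1) by (rule finite_subset[rotated]) (auto simp: S_def newton_argmin_def)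
  ultimately have "?M \<noteq> {}"
    by auto
  note minmax = Min_in[OF M this] Max_in[OF M this]
  obtain i where "i \<in> ?M" "i \<noteq> Min ?M"
    using root_newton_argmin_ne_singleton[OF assms(2,3) minmax(1)] by blast
  then have "Min ?M < Max ?M"
    using Min_le[OF M \<open>i \<in> ?M\<close>] Max_ge[OF M \<open>i \<in> ?M\<close>] by linarith
  moreover have "?M \<subseteq> {Min ?M..Max ?M}"
    using Min_le[OF M] Max_ge[OF M] by auto
  ultimately show ?thesis
    using lower_edge_if_argmin[OF _ minmax] that by blast
qed

definition edge_roots :: "'k poly \<Rightarrow> nat \<Rightarrow> nat \<Rightarrow> 'k set" where
  "edge_roots f s' s =
     {x. x \<noteq> 0 \<and> poly f x = 0 \<and> newton_weight v f (v x) s' = newton_weight v f (v x) s}"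

lemma nonzero_roots_eq_Union_edge_roots:
  assumes "f \<noteq> 0"
  shows "{x. x \<noteq> 0 \<and> poly f x = 0} = (\<Union>(s', s)\<in>{(s', s). lower_edge v f s' s}. edge_roots f s' s)"
proof (intro equalityI subsetI)
  fix x assume "x \<in> {x. x \<noteq> 0 \<and> poly f x = 0}"
  then obtain s' s where "lower_edge v f s' s" "newton_weight v f (v x) s' = newton_weight v f (v x) s"
    using root_lower_edge[OF assms] by blast
  with \<open>x \<in> {x. x \<noteq> 0 \<and> poly f x = 0}\<close> show "x \<in> (\<Union>(s', s)\<in>{(s', s). lower_edge v f s' s}. edge_roots f s' s)"
    by (auto simp: edge_roots_def)
qed (auto simp: edge_roots_def)

lemma edge_roots_disjoint:
  assumes "lower_edge v f s1' s1" "lower_edge v f s2' s2" "(s1', s1) \<noteq> (s2', s2)"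
  shows "edge_roots f s1' s1 \<inter> edge_roots f s2' s2 = {}"
  using lower_edges_unique[OF assms(1) _ assms(2)] assms(3) by (auto simp: edge_roots_def)

lemma nonzero_roots_lower_binomial:
  assumes "lower_edge v f s' s"
  shows "{x. x \<noteq> 0 \<and> poly (lower_binomial f s' s) x = 0} =
    {x. x \<noteq> 0 \<and> poly (lower_binomial f s' s) x = 0 \<and>
        newton_weight v f (v x) s' = newton_weight v f (v x) s}"
proof -
  have "newton_weight v f (v x) s' = newton_weight v f (v x) s"
    if "x \<noteq> 0" "coeff f s' * x ^ s' + coeff f s * x ^ s = 0" for x
  proof -
    have "v (coeff f s' * x ^ s') = v (coeff f s * x ^ s)"
      using that(2) by (metis add_eq_0_iff v_minus)
    then show ?thesis
      using assms that(1) by (simp add: v_coeff_monomial lower_edge_def)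
  qed
  then show ?thesis
    by (auto simp: lower_binomial_def poly_monom)
qed

lemma card_roots_of_val_rescale:
  assumes "z \<noteq> 0" "c \<noteq> 0"
  shows "card {x. x \<noteq> 0 \<and> poly h x = 0 \<and> v x = v z} =
    card (unit_roots (smult c (pcompose h [:0, z:])))"
proof -
  have "{x. x \<noteq> 0 \<and> poly h x = 0 \<and> v x = v z} = (\<lambda>u. z * u) ` unit_roots (smult c (pcompose h [:0, z:]))"
  proof (intro set_eqI iffI)
    fix x assume x: "x \<in> {x. x \<noteq> 0 \<and> poly h x = 0 \<and> v x = v z}"
    then have "x / z \<in> unit_roots (smult c (pcompose h [:0, z:]))"
      using assms v_divide[of x z] by (simp add: unit_roots_def val_unit_def poly_pcompose)
    then show "x \<in> (\<lambda>u. z * u) ` unit_roots (smult c (pcompose h [:0, z:]))"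
      using assms(1) by (intro image_eqI[of _ _ "x / z"]) auto
  qed (use assms in \<open>auto simp: unit_roots_def val_unit_def poly_pcompose v_mult mult.commute\<close>)
  moreover have "inj_on (\<lambda>u. z * u) (unit_roots (smult c (pcompose h [:0, z:])))"
    using assms(1) by (auto intro: inj_onI)
  ultimately show ?thesis
    by (simp add: card_image)
qed

lemma rescaled_edge_coeffs:
  assumes regular: "regular v p f" and edge: "lower_edge v f s' s"
    and z: "z \<noteq> 0" "newton_weight v f (v z) s' = newton_weight v f (v z) s"
  defines "g \<equiv> smult (inverse (coeff f s' * z ^ s')) (pcompose f [:0, z:])"
  shows "integral_poly g" "coeff g s' = 1" "val_unit (coeff g s)"
    and "\<And>i. coeff (g - lower_binomial g s' s) i \<in> val_ideal v 1"
proof -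
  let ?W = "newton_weight v f (v z)"
  have s: "s' < s" "coeff f s' \<noteq> 0" "coeff f s \<noteq> 0"
    using edge by (auto simp: lower_edge_def)
  have argmin: "newton_argmin v f (v z) = {s', s}"
    using regular_newton_argmin[OF regular edge z(2)] .
  have coeff_g: "coeff g i = inverse (coeff f s' * z ^ s') * (coeff f i * z ^ i)" for i
    by (simp add: g_def coeff_pcompose_linear mult.commute)
  have v_coeff_g: "coeff g i \<noteq> 0 \<and> v (coeff g i) = ?W i - ?W s'" if "coeff f i \<noteq> 0" for i
    using that s(2) z(1) by (simp add: coeff_g v_mult v_inverse v_power newton_weight_def)
  have W_min: "?W s' \<le> ?W i" if "coeff f i \<noteq> 0" for i
    using that argmin by (auto simp: newton_argmin_def)
  have W_less: "?W s' < ?W i" if "coeff f i \<noteq> 0" "i \<noteq> s'" "i \<noteq> s" for i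
    using newton_weight_less_outside_argmin[of s' v f "v z" i] that argmin by simp
  show "coeff g s' = 1"
    using s(2) z(1) by (simp add: coeff_g field_simps)
  show "val_unit (coeff g s)"
    using v_coeff_g[OF s(3)] z(2) by (simp add: val_unit_def)
  show "integral_poly g"
    unfolding integral_poly_def val_ideal_def using v_coeff_g W_min by (force simp: coeff_g)
  show "coeff (g - lower_binomial g s' s) i \<in> val_ideal v 1" for i
    using v_coeff_g[of i] W_less[of i] s(1)
    by (cases "coeff f i = 0") (auto simp: coeff_g val_ideal_def lower_binomial_def coeff_monom)
qed

lemma card_unit_roots_rescaled_edge:
  assumes complete: "valuation_complete v" and p: "prime p" "of_nat p \<in> val_ideal v 1"
    and regular: "regular v p f" and edge: "lower_edge v f s' s"
    and z: "z \<noteq> 0" "newton_weight v f (v z) s' = newton_weight v f (v z) s"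
  defines "g \<equiv> smult (inverse (coeff f s' * z ^ s')) (pcompose f [:0, z:])"
  shows "card (unit_roots g) = card (unit_roots (lower_binomial g s' s))"
proof -
  note g = rescaled_edge_coeffs[OF regular edge z, folded g_def]
  have s: "s' < s"
    using edge by (simp add: lower_edge_def)
  have B: "lower_binomial g s' s = monom 1 s' + monom (coeff g s) s"
    by (simp add: lower_binomial_def g(2))
  have "coeff (lower_binomial g s' s) s' = 1"
    using g(2) s by (simp add: B)
  then have "g \<noteq> 0" "lower_binomial g s' s \<noteq> 0"
    using g(2) by auto
  moreover have "integral_poly (lower_binomial g s' s)"
    using g(1) s unfolding integral_poly_def by (simp add: lower_binomial_def coeff_monom)
  moreover have "residually_simple (lower_binomial g s' s)"
  proof -
    have "\<not> p dvd (s - s')"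
      using regular edge unfolding regular_def by blast
    then show ?thesis
      using binomial_residually_simple[OF s g(3) of_nat_val_unit[OF p]] B by simp
  qed
  ultimately show ?thesis
    using card_unit_roots_eq[OF complete g(1) _ _ _ g(4)] by blast
qed

lemma card_edge_roots:
  assumes complete: "valuation_complete v" and p: "prime p" "of_nat p \<in> val_ideal v 1"
    and regular: "regular v p f" and edge: "lower_edge v f s' s"
  shows "card (edge_roots f s' s) = card {x. x \<noteq> 0 \<and> poly (lower_binomial f s' s) x = 0}"
proof (cases "\<exists>z. z \<noteq> 0 \<and> newton_weight v f (v z) s' = newton_weight v f (v z) s")
  case True
  then obtain z where z: "z \<noteq> 0" "newton_weight v f (v z) s' = newton_weight v f (v z) s"
    by blast
  have s: "s' < s" "coeff f s' \<noteq> 0"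
    using edge by (auto simp: lower_edge_def)
  define c where "c = inverse (coeff f s' * z ^ s')"
  have "c \<noteq> 0"
    using s(2) z(1) by (simp add: c_def)
  note slope = newton_weight_edge_eq_iff[OF s(1) z(2)]
  have "card (edge_roots f s' s) = card {x. x \<noteq> 0 \<and> poly f x = 0 \<and> v x = v z}"
    unfolding edge_roots_def slope by simp
  also have "\<dots> = card (unit_roots (smult c (pcompose f [:0, z:])))"
    using card_roots_of_val_rescale[OF z(1) \<open>c \<noteq> 0\<close>] .
  also have "\<dots> = card (unit_roots (lower_binomial (smult c (pcompose f [:0, z:])) s' s))"
    unfolding c_def using card_unit_roots_rescaled_edge[OF complete p regular edge z] .
  also have "\<dots> = card {x. x \<noteq> 0 \<and> poly (lower_binomial f s' s) x = 0 \<and> v x = v z}"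
    unfolding lower_binomial_rescale using card_roots_of_val_rescale[OF z(1) \<open>c \<noteq> 0\<close>] by simp
  also have "\<dots> = card {x. x \<noteq> 0 \<and> poly (lower_binomial f s' s) x = 0}"
    unfolding nonzero_roots_lower_binomial[OF edge] slope ..
  finally show ?thesis .
next
  case False
  then have no_roots: "edge_roots f s' s = {}" "{x. x \<noteq> 0 \<and> poly (lower_binomial f s' s) x = 0} = {}"
    unfolding edge_roots_def nonzero_roots_lower_binomial[OF edge] by auto
  show ?thesis
    unfolding no_roots by simp
qed

end

theorem theorem4p6:
  fixes v :: "'k::field \<Rightarrow> int" and p q :: nat and f :: "'k poly"
  assumes "discrete_valuation v"
    and "valuation_complete v"
    and "finite (residue_field v)" and "card (residue_field v) = q"
    and "prime p" and "of_nat p \<in> max_ideal v"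
    and "f \<noteq> 0"
    and "regular v p f"
  shows "card {x. x \<noteq> 0 \<and> poly f x = 0} =
    (\<Sum>(s', s)\<in>{(s', s). lower_edge v f s' s}.
        card {x. x \<noteq> 0 \<and> poly (lower_binomial f s' s) x = 0})"
proof -
  interpret valued_field v
    using assms(1) by unfold_locales
  define E where "E = {(s', s). lower_edge v f s' s}"
  have "finite E"
    by (rule finite_subset[of _ "{..degree f} \<times> {..degree f}"]) (auto simp: E_def lower_edge_def le_degree)
  have "card {x. x \<noteq> 0 \<and> poly f x = 0} = card (\<Union>e\<in>E. case e of (s', s) \<Rightarrow> edge_roots f s' s)"
    unfolding nonzero_roots_eq_Union_edge_roots[OF assms(7)] E_def ..
  also have "\<dots> = (\<Sum>e\<in>E. card (case e of (s', s) \<Rightarrow> edge_roots f s' s))"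
  proof (rule card_UN_disjoint[OF \<open>finite E\<close>])
    show "\<forall>e\<in>E. finite (case e of (s', s) \<Rightarrow> edge_roots f s' s)"
      using finite_subset[OF _ poly_roots_finite[OF assms(7)]] by (auto simp: edge_roots_def)
  qed (use edge_roots_disjoint in \<open>fastforce simp: E_def\<close>)
  also have "\<dots> = (\<Sum>(s', s)\<in>E. card {x. x \<noteq> 0 \<and> poly (lower_binomial f s' s) x = 0})"
    using card_edge_roots[OF assms(2,5)] assms(6,8)
    by (intro sum.cong) (auto simp: E_def max_ideal_eq_val_ideal)
  finally show ?thesis
    by (simp add: E_def)
qed

end
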